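(* Let $x:[0,\infty)\to\mathbb{R}^m$ be of the form $x(t)=\sum_{i=0}^{n-1}y_i\,\theta_i(t)$ with vectors $y_0,\ldots,y_{n-1}\in\mathbb{R}^m$ and scalar functions $\theta_0,\ldots,\theta_{n-1}$ such that for all $t\ge 0$: (i) $\theta_i(t)\ge 0$ for all $i$; (ii) there are fixed scalars $\beta_0,\ldots,\beta_{n-1}>0$ with $\beta_i\theta_i(t)\ge\beta_j\theta_j(t)$ whenever $i\le j$; (iii) $\theta_0(t)\le 1$. Then for all $t\ge 0$, $$x(t)\in\operatorname{conv}\left\{\sum_{j=0}^{i-1}\frac{\beta_0}{\beta_j}y_j\;:\;i=0,1,\ldots,n\right\},$$ i.e. $x(t)$ lies in the convex hull of $0,\ \frac{\beta_0}{\beta_0}y_0,\ \ldots,\ \sum_{j=0}^{n-1}\frac{\beta_0}{\beta_j}y_j$.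
   Context: In the paper, $x$ is the solution of an $n$-th order linear companion system and the $y_i$ depend on its initial state, but the statement only uses the displayed representation. An empty sum is $0$; $\operatorname{conv}$ denotes convex hull. *)

theory Defs
  imports "HOL-Analysis.Analysis"
begin

end

theory Submission
  imports Defs
begin

text \<open>With increments \<open>d j = (\<beta> 0 / \<beta> j) y j\<close> and coefficients \<open>c i = \<beta> i \<theta> i t / \<beta> 0\<close>
  we have \<open>x t = \<Sum>i<n. c i d i\<close>, and the hypotheses say exactly that
  \<open>1 \<ge> c 0 \<ge> c 1 \<ge> \<dots> \<ge> c (n - 1) \<ge> 0\<close>. Summation by parts rewrites this sum as a
  combination of the partial sums \<open>S i = \<Sum>j<i. d j\<close> with weights \<open>c (i - 1) - c i\<close>, where
  \<open>c (-1) = 1\<close> and \<open>c n = 0\<close>; these weights are nonnegative and telescope to \<open>1\<close>.\<close>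

lemma sum_scaleR_partial_sums_by_parts:
  fixes a :: "nat \<Rightarrow> real" and d :: "nat \<Rightarrow> 'a::real_vector"
  shows "(\<Sum>i\<le>n. (a i - a (Suc i)) *\<^sub>R (\<Sum>j<i. d j)) = (\<Sum>i<n. (a (Suc i) - a (Suc n)) *\<^sub>R d i)"
proof (induction n)
  case 0
  then show ?case by simp
next
  case (Suc n)
  have "(\<Sum>i<n. (a (Suc i) - a (Suc n)) *\<^sub>R d i) + (a (Suc n) - a (Suc (Suc n))) *\<^sub>R (\<Sum>j<Suc n. d j)
      = (\<Sum>i<Suc n. (a (Suc i) - a (Suc (Suc n))) *\<^sub>R d i)"
    by (simp add: scaleR_sum_right algebra_simps flip: sum.distrib)
  with Suc.IH show ?case by simp
qed

lemma antitone_weighted_sum_in_convex_hull_partial_sums: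
  fixes c :: "nat \<Rightarrow> real" and d :: "nat \<Rightarrow> 'a::real_vector"
  assumes antitone: "\<And>i. Suc i < n \<Longrightarrow> c (Suc i) \<le> c i"
    and nonneg: "\<And>i. i < n \<Longrightarrow> 0 \<le> c i"
    and le_one: "0 < n \<Longrightarrow> c 0 \<le> 1"
  shows "(\<Sum>i<n. c i *\<^sub>R d i) \<in> convex hull {\<Sum>j<i. d j | i. i \<le> n}"
proof -
  define a where "a i = (case i of 0 \<Rightarrow> 1 | Suc k \<Rightarrow> if k < n then c k else 0)" for i
  have weights_nonneg: "0 \<le> a i - a (Suc i)" if "i \<le> n" for i
    using that antitone nonneg le_one by (cases i) (auto simp: a_def)
  have "(\<Sum>i\<le>n. a i - a (Suc i)) = a 0 - a (Suc n)"
    by (simp only: lessThan_Suc_atMost [symmetric] sum_lessThan_telescope')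
  then have weights_sum: "(\<Sum>i\<le>n. a i - a (Suc i)) = 1"
    by (simp add: a_def)
  have "(\<Sum>i<n. c i *\<^sub>R d i) = (\<Sum>i<n. (a (Suc i) - a (Suc n)) *\<^sub>R d i)"
    by (intro sum.cong) (auto simp: a_def)
  also have "\<dots> = (\<Sum>i\<le>n. (a i - a (Suc i)) *\<^sub>R (\<Sum>j<i. d j))"
    by (rule sum_scaleR_partial_sums_by_parts [symmetric])
  also have "\<dots> \<in> convex hull {\<Sum>j<i. d j | i. i \<le> n}"
    using weights_sum weights_nonneg
    by (intro convex_sum convex_convex_hull hull_inc) auto
  finally show ?thesis .
qed

theorem proposition10:
  fixes n :: nat
    and y :: "nat \<Rightarrow> real ^ 'm"
    and \<theta> :: "nat \<Rightarrow> real \<Rightarrow> real"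
    and \<beta> :: "nat \<Rightarrow> real"
    and x :: "real \<Rightarrow> real ^ 'm"
  assumes x_def: "\<And>t. t \<ge> 0 \<Longrightarrow> x t = (\<Sum>i<n. \<theta> i t *\<^sub>R y i)"
    and beta_pos: "\<And>i. i < n \<Longrightarrow> \<beta> i > 0"
    and theta_nonneg: "\<And>t i. t \<ge> 0 \<Longrightarrow> i < n \<Longrightarrow> \<theta> i t \<ge> 0"
    and theta_ord: "\<And>t i j. t \<ge> 0 \<Longrightarrow> i \<le> j \<Longrightarrow> j < n \<Longrightarrow> \<beta> i * \<theta> i t \<ge> \<beta> j * \<theta> j t"
    and theta0_le1: "\<And>t. t \<ge> 0 \<Longrightarrow> \<theta> 0 t \<le> 1"
  shows "\<And>t. t \<ge> 0 \<Longrightarrow>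
    x t \<in> convex hull {(\<Sum>j<i. (\<beta> 0 / \<beta> j) *\<^sub>R y j) | i. i \<le> n}"
proof -
  fix t :: real
  assume t: "t \<ge> 0"
  define c where "c i = \<beta> i * \<theta> i t / \<beta> 0" for i
  have "x t = (\<Sum>i<n. c i *\<^sub>R ((\<beta> 0 / \<beta> i) *\<^sub>R y i))"
    unfolding x_def[OF t] using beta_pos[of 0]
    by (intro sum.cong refl) (simp add: c_def beta_pos[THEN less_imp_neq, symmetric])
  also have "\<dots> \<in> convex hull {(\<Sum>j<i. (\<beta> 0 / \<beta> j) *\<^sub>R y j) | i. i \<le> n}"
  proof (rule antitone_weighted_sum_in_convex_hull_partial_sums)
    show "c (Suc i) \<le> c i" if "Suc i < n" for i
      using theta_ord[OF t, of i "Suc i"] that beta_pos[of 0] by (simp add: c_def divide_right_mono)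
    show "0 \<le> c i" if "i < n" for i
      using beta_pos[OF that] theta_nonneg[OF t that] beta_pos[of 0] that by (simp add: c_def)
    show "c 0 \<le> 1" if "0 < n"
      using theta0_le1[OF t] beta_pos[OF that] by (simp add: c_def)
  qed
  finally show "x t \<in> convex hull {(\<Sum>j<i. (\<beta> 0 / \<beta> j) *\<^sub>R y j) | i. i \<le> n}" .
qed

end
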